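(* Let $(X,0)\subset(\mathbb{C}^{n+1},0)$ be a reduced germ of analytic singularity of pure dimension $d$, let $\varphi:(\mathfrak{X},0)\to(\mathbb{C},0)$ be its specialization to the tangent cone, $\mathfrak{X}^0$ the smooth part of $\mathfrak{X}$ and $Y=\{0\}\times\mathbb{C}\subset\mathfrak{X}$. If the pair $(\mathfrak{X}^0,Y)$ satisfies Whitney's condition a) at the origin, then it also satisfies Whitney's condition b) at the origin.
   Context: Specialization: with $I=\langle f_1,\dots,f_p\rangle\subset\mathbb{C}\{z_0,\dots,z_n\}$ the ideal of $X$, the generators chosen so that their initial forms (lowest-degree homogeneous parts), of degrees $m_i$, generate the ideal of initial forms of $I$ (which defines the tangent cone), set $F_i(z,t)=t^{-m_i}f_i(tz_0,\dots,tz_n)$; $\mathfrak{X}=V(F_1,\dots,F_p)\subset(\mathbb{C}^{n+1}\times\mathbb{C},0)$ and $\varphi$ is the projection to $t$. Whitney conditions at $y\in Y$: a) for every sequence $x_i\in\mathfrak{X}^0$ tending to $y$ with $T_{x_i}\mathfrak{X}\to T$, $T_yY\subset T$; b) for all sequences $x_i\in\mathfrak{X}^0\setminus Y$, $y_i\in Y$ tending to $y$ with $T_{x_i}\mathfrak{X}\to T$ and $\overline{x_iy_i}\to\ell$, $\ell\subset T$. *)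

theory Defs
  imports "HOL-Analysis.Analysis"
begin

definition cmul :: "complex \<Rightarrow> complex^'k \<Rightarrow> complex^'k" where
  "cmul c v = (\<chi> j. c * v $ j)"

definition holo_on :: "(complex^'k) set \<Rightarrow> (complex^'k \<Rightarrow> complex) \<Rightarrow> bool" where
  "holo_on V g \<longleftrightarrow> open V \<and>
     (\<forall>x\<in>V. \<exists>D. (g has_derivative D) (at x) \<and> (\<forall>v. D (cmul \<i> v) = \<i> * D v))"

definition poly_fun :: "(complex^'k \<Rightarrow> complex) \<Rightarrow> bool" where
  "poly_fun q \<longleftrightarrow> (\<exists>(c :: ('k \<Rightarrow> nat) \<Rightarrow> complex) A. finite A \<and>
      q = (\<lambda>z. \<Sum>\<alpha>\<in>A. c \<alpha> * (\<Prod>j\<in>UNIV. z $ j ^ \<alpha> j)))"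

text \<open>Degree-k homogeneous part of the Taylor expansion at 0: the t^k coefficient of t \<mapsto> g(tz).\<close>
definition hom_part :: "(complex^'k \<Rightarrow> complex) \<Rightarrow> nat \<Rightarrow> complex^'k \<Rightarrow> complex" where
  "hom_part g k z = (deriv ^^ k) (\<lambda>t. g (cmul t z)) 0 / of_nat (fact k)"

definition ord0 :: "(complex^'k \<Rightarrow> complex) \<Rightarrow> nat" where
  "ord0 g = (LEAST k. hom_part g k \<noteq> (\<lambda>_. 0))"

definition initial_form :: "(complex^'k \<Rightarrow> complex) \<Rightarrow> complex^'k \<Rightarrow> complex" where
  "initial_form g = hom_part g (ord0 g)"

definition local_eqns ::
  "(complex^'m) set \<Rightarrow> complex^'m \<Rightarrow> (complex^'m) set \<Rightarrow> nat \<Rightarrow>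
   (nat \<Rightarrow> complex^'m \<Rightarrow> complex) \<Rightarrow> (nat \<Rightarrow> complex^'m \<Rightarrow> complex) \<Rightarrow> bool" where
  "local_eqns S x V r g D \<longleftrightarrow> x \<in> S \<and> open V \<and> x \<in> V \<and>
     (\<forall>j<r. holo_on V (g j)) \<and>
     S \<inter> V = {y\<in>V. \<forall>j<r. g j y = 0} \<and>
     (\<forall>j<r. (g j has_derivative D j) (at x)) \<and>
     (\<forall>c :: nat \<Rightarrow> complex. (\<forall>v. (\<Sum>j<r. c j * D j v) = 0) \<longrightarrow> (\<forall>j<r. c j = 0))"

definition smooth_pt_dim :: "(complex^'m) set \<Rightarrow> complex^'m \<Rightarrow> nat \<Rightarrow> bool" where
  "smooth_pt_dim S x k \<longleftrightarrow> (\<exists>V r g D. local_eqns S x V r g D \<and> k + r = CARD('m))"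

definition smooth_part :: "(complex^'m) set \<Rightarrow> (complex^'m) set" where
  "smooth_part S = {x. \<exists>k. smooth_pt_dim S x k}"

definition tangent_at :: "(complex^'m) set \<Rightarrow> complex^'m \<Rightarrow> (complex^'m) set \<Rightarrow> bool" where
  "tangent_at S x T \<longleftrightarrow> (\<exists>V r g D. local_eqns S x V r g D \<and> T = {v. \<forall>j<r. D j v = 0})"

section \<open>Convergence of linear subspaces (Grassmannian topology via orthogonal projections)\<close>

definition oproj :: "(complex^'m) set \<Rightarrow> complex^'m \<Rightarrow> complex^'m" where
  "oproj T v = (THE w. w \<in> T \<and> (\<forall>u\<in>T. inner (v - w) u = 0))"

definition subspace_conv :: "(nat \<Rightarrow> (complex^'m) set) \<Rightarrow> (complex^'m) set \<Rightarrow> bool" where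
  "subspace_conv Ts T \<longleftrightarrow> subspace T \<and> (\<forall>i. subspace (Ts i)) \<and>
     (\<forall>v. (\<lambda>i. oproj (Ts i) v) \<longlonglongrightarrow> oproj T v)"

definition cline :: "complex^'m \<Rightarrow> (complex^'m) set" where
  "cline v = range (\<lambda>c. cmul c v)"

definition whitney_a :: "(complex^'m) set \<Rightarrow> (complex^'m) set \<Rightarrow> complex^'m \<Rightarrow> bool" where
  "whitney_a Xs Y y \<longleftrightarrow> (\<forall>xs Ts T. (\<forall>i. xs i \<in> smooth_part Xs \<and> tangent_at Xs (xs i) (Ts i)) \<longrightarrow>
      xs \<longlonglongrightarrow> y \<longrightarrow> subspace_conv Ts T \<longrightarrow> (\<forall>TY. tangent_at Y y TY \<longrightarrow> TY \<subseteq> T))"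

definition whitney_b :: "(complex^'m) set \<Rightarrow> (complex^'m) set \<Rightarrow> complex^'m \<Rightarrow> bool" where
  "whitney_b Xs Y y \<longleftrightarrow> (\<forall>xs ys Ts T L.
      (\<forall>i. xs i \<in> smooth_part Xs - Y \<and> ys i \<in> Y \<and> tangent_at Xs (xs i) (Ts i)) \<longrightarrow>
      xs \<longlonglongrightarrow> y \<longrightarrow> ys \<longlonglongrightarrow> y \<longrightarrow> subspace_conv Ts T \<longrightarrow>
      subspace_conv (\<lambda>i. cline (xs i - ys i)) L \<longrightarrow> L \<subseteq> T)"

definition germ_zero_set :: "(complex^'n) set \<Rightarrow> nat \<Rightarrow> (nat \<Rightarrow> complex^'n \<Rightarrow> complex) \<Rightarrow> bool" where
  "germ_zero_set X p f \<longleftrightarrow> (\<exists>V. open V \<and> 0 \<in> V \<and> X \<inter> V = {z\<in>V. \<forall>i<p. f i z = 0})"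

definition in_ideal_of :: "(complex^'n) set \<Rightarrow> (complex^'n) set \<Rightarrow> (complex^'n \<Rightarrow> complex) \<Rightarrow> bool" where
  "in_ideal_of X V g \<longleftrightarrow> open V \<and> 0 \<in> V \<and> holo_on V g \<and> (\<forall>x\<in>X \<inter> V. g x = 0)"

definition generates_ideal :: "(complex^'n) set \<Rightarrow> nat \<Rightarrow> (nat \<Rightarrow> complex^'n \<Rightarrow> complex) \<Rightarrow> bool" where
  "generates_ideal X p f \<longleftrightarrow> (\<forall>V g. in_ideal_of X V g \<longrightarrow>
     (\<exists>V' a. open V' \<and> 0 \<in> V' \<and> V' \<subseteq> V \<and> (\<forall>i<p. holo_on V' (a i)) \<and>
        (\<forall>z\<in>V'. g z = (\<Sum>i<p. a i z * f i z))))"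

definition initial_forms_generate :: "(complex^'n) set \<Rightarrow> nat \<Rightarrow> (nat \<Rightarrow> complex^'n \<Rightarrow> complex) \<Rightarrow> bool" where
  "initial_forms_generate X p f \<longleftrightarrow> (\<forall>V g. in_ideal_of X V g \<longrightarrow> (\<exists>k. hom_part g k \<noteq> (\<lambda>_. 0)) \<longrightarrow>
     (\<exists>b. (\<forall>i<p. poly_fun (b i)) \<and> initial_form g = (\<lambda>z. \<Sum>i<p. b i z * initial_form (f i) z)))"

definition pure_dim :: "(complex^'n) set \<Rightarrow> nat \<Rightarrow> bool" where
  "pure_dim X d \<longleftrightarrow> (\<exists>V. open V \<and> 0 \<in> V \<and>
     (\<forall>x\<in>X \<inter> V. \<forall>k. smooth_pt_dim X x k \<longrightarrow> k = d) \<and>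
     X \<inter> V \<subseteq> closure {x. smooth_pt_dim X x d})"

text \<open>C^{n+1} x C is modelled as complex^('n option): coordinate None is t, Some j are the z_j.\<close>
definition zpart :: "complex^('n::finite option) \<Rightarrow> complex^'n" where
  "zpart w = (\<chi> j. w $ Some j)"

definition tpart :: "complex^('n::finite option) \<Rightarrow> complex" where
  "tpart w = w $ None"

definition Fspec :: "(nat \<Rightarrow> complex^'n::finite \<Rightarrow> complex) \<Rightarrow> nat \<Rightarrow> complex^('n option) \<Rightarrow> complex" where
  "Fspec f i w = (if tpart w = 0 then initial_form (f i) (zpart w)
                  else f i (cmul (tpart w) (zpart w)) / tpart w ^ ord0 (f i))"

text \<open>Specialization space V(F_1,..,F_p), on the open set where the F_i are defined (tz \<in> U).\<close>
definition spec_space :: "(complex^'n::finite) set \<Rightarrow> nat \<Rightarrow> (nat \<Rightarrow> complex^'n \<Rightarrow> complex) \<Rightarrow> (complex^('n option)) set" where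
  "spec_space U p f = {w. cmul (tpart w) (zpart w) \<in> U \<and> (\<forall>i<p. Fspec f i w = 0)}"

definition spec_axis :: "(complex^('n::finite option)) set" where
  "spec_axis = {w. zpart w = 0}"

end

theory Submission
  imports Defs "HOL-Complex_Analysis.Cauchy_Integral_Formula"
begin

text \<open>The specialization space is invariant under the real dilations
  \<open>(z, t) \<mapsto> (l z, t / l)\<close>, \<open>l > 0\<close>, because \<open>F\<^sub>i(l z, t / l) = l^m\<^sub>i F\<^sub>i(z, t)\<close>. Hence at a
  smooth point \<open>w = (z, t)\<close> the velocity \<open>(z, -t)\<close> of its orbit is tangent, and for \<open>y = (0, s)\<close>
  the secant \<open>w - y\<close> is this velocity plus \<open>(2t - s) \<partial>\<^sub>t\<close>. Dilating \<open>w\<close> by \<open>\<bar>z\<bar>\<^sup>-\<^sup>1\<^sup>/\<^sup>2\<close> gives points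
  tending to the origin, so by Whitney a) their tangent spaces contain vectors close to \<open>\<partial>\<^sub>t\<close>;
  dilating back, \<open>T\<^sub>w\<close> contains \<open>\<partial>\<^sub>t + e\<close> with \<open>\<bar>e\<bar> \<le> \<bar>z\<bar>\<close>. So the secant lies within
  \<open>\<bar>2t - s\<bar> \<bar>w - y\<bar>\<close> of \<open>T\<^sub>w\<close>, and as \<open>2t - s \<rightarrow> 0\<close> every limit of secant lines lies in the
  limit of the tangent spaces.\<close>

section \<open>Orthogonal projections and limits of subspaces\<close>

lemma oproj_unique:
  assumes "subspace S" "w \<in> S" "\<forall>u\<in>S. inner (v - w) u = 0"
  shows "oproj S v = w"
  unfolding oproj_def
proof (rule the_equality)
  fix w' assume w': "w' \<in> S \<and> (\<forall>u\<in>S. inner (v - w') u = 0)"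
  have "w' - w \<in> S" using assms w' by (simp add: subspace_diff)
  then have "inner (v - w) (w' - w) - inner (v - w') (w' - w) = 0"
    using assms w' by simp
  then have "inner (w' - w) (w' - w) = 0" by (simp add: inner_diff_left)
  then show "w' = w" by simp
qed (use assms in blast)

lemma oproj_in_orthogonal:
  fixes S :: "(complex^'m) set"
  assumes "subspace S"
  shows "oproj S v \<in> S \<and> (\<forall>u\<in>S. inner (v - oproj S v) u = 0)"
proof -
  obtain y z where y: "y \<in> span S" and z: "\<And>w. w \<in> span S \<Longrightarrow> orthogonal z w" and "v = y + z"
    using orthogonal_subspace_decomp_exists[of S v] by blast
  moreover have "span S = S" using assms by (simp add: span_eq_iff)
  ultimately have "y \<in> S" "\<forall>u\<in>S. inner (v - y) u = 0" by (auto simp: orthogonal_def)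
  then show ?thesis using oproj_unique[OF assms] by simp
qed

lemma oproj_in: "subspace S \<Longrightarrow> oproj S (v::complex^'m) \<in> S"
  using oproj_in_orthogonal by blast

lemma oproj_orthogonal: "subspace S \<Longrightarrow> u \<in> S \<Longrightarrow> inner ((v::complex^'m) - oproj S v) u = 0"
  using oproj_in_orthogonal by blast

lemma oproj_eq_self_iff: "subspace S \<Longrightarrow> oproj S (v::complex^'m) = v \<longleftrightarrow> v \<in> S"
  using oproj_in[of S v] oproj_unique[of S v v] by auto

lemma linear_oproj:
  fixes S :: "(complex^'m) set"
  assumes "subspace S"
  shows "linear (oproj S)"
proof
  fix x y :: "complex^'m"
  show "oproj S (x + y) = oproj S x + oproj S y"
  proof (rule oproj_unique[OF assms])
    show "oproj S x + oproj S y \<in> S" using assms oproj_in subspace_add by blast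
    show "\<forall>u\<in>S. inner (x + y - (oproj S x + oproj S y)) u = 0"
      using oproj_orthogonal[OF assms, of _ x] oproj_orthogonal[OF assms, of _ y]
      by (simp add: inner_diff_left inner_add_left)
  qed
next
  fix r and x :: "complex^'m"
  show "oproj S (r *\<^sub>R x) = r *\<^sub>R oproj S x"
  proof (rule oproj_unique[OF assms])
    show "r *\<^sub>R oproj S x \<in> S" using assms oproj_in subspace_scale by blast
    show "\<forall>u\<in>S. inner (r *\<^sub>R x - r *\<^sub>R oproj S x) u = 0"
      using oproj_orthogonal[OF assms, of _ x] by (simp add: inner_diff_left)
  qed
qed

lemma norm_diff_oproj_le:
  fixes S :: "(complex^'m) set"
  assumes "subspace S" "u \<in> S"
  shows "norm (v - oproj S v) \<le> norm (v - u)"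
proof -
  have "oproj S v - u \<in> S" using assms oproj_in subspace_diff by blast
  then have "orthogonal (v - oproj S v) (oproj S v - u)"
    using oproj_orthogonal[OF assms(1)] by (simp add: orthogonal_def)
  then have "(norm (v - u))\<^sup>2 = (norm (v - oproj S v))\<^sup>2 + (norm (oproj S v - u))\<^sup>2"
    using norm_add_Pythagorean by fastforce
  then have "(norm (v - oproj S v))\<^sup>2 \<le> (norm (v - u))\<^sup>2" by simp
  then show ?thesis by (rule power2_le_imp_le) simp
qed

lemma norm_oproj_le:
  fixes S :: "(complex^'m) set"
  assumes "subspace S"
  shows "norm (oproj S v) \<le> norm v"
proof -
  have "orthogonal (v - oproj S v) (oproj S v)"
    using oproj_orthogonal[OF assms] oproj_in[OF assms] by (simp add: orthogonal_def)
  then have "(norm v)\<^sup>2 = (norm (v - oproj S v))\<^sup>2 + (norm (oproj S v))\<^sup>2"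
    using norm_add_Pythagorean by fastforce
  then have "(norm (oproj S v))\<^sup>2 \<le> (norm v)\<^sup>2" by simp
  then show ?thesis by (rule power2_le_imp_le) simp
qed

text \<open>Compactness of the Grassmannian, inherited from the unit ball of operators via the projections.\<close>
lemma subspace_conv_convergent_subseq:
  fixes S :: "nat \<Rightarrow> (complex^'m) set"
  assumes "\<And>i. subspace (S i)"
  shows "\<exists>r T. strict_mono r \<and> subspace_conv (S \<circ> r) T"
proof -
  define P where "P i = Blinfun (oproj (S i))" for i
  have P: "blinfun_apply (P i) = oproj (S i)" for i
    unfolding P_def using assms linear_oproj linear_conv_bounded_linear bounded_linear_Blinfun_apply
    by blast
  have "norm (P i) \<le> 1" for i
    by (rule norm_blinfun_bound) (auto simp: P intro: norm_oproj_le assms)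
  then have "bounded (range P)" unfolding bounded_iff by blast
  then obtain l r where r: "strict_mono r" and lim: "(P \<circ> r) \<longlonglongrightarrow> l"
    using bounded_imp_convergent_subsequence by blast
  have lim_apply: "(\<lambda>i. oproj (S (r i)) v) \<longlonglongrightarrow> blinfun_apply l v" for v
    using blinfun.tendsto[OF lim tendsto_const, of v] by (simp add: P o_def)
  define T where "T = range (blinfun_apply l)"
  have T: "subspace T"
    unfolding T_def
    by (rule linear_subspace_image[OF bounded_linear.linear[OF blinfun.bounded_linear_right] subspace_UNIV])
  have "oproj T v = blinfun_apply l v" for v
  proof (rule oproj_unique[OF T])
    show "blinfun_apply l v \<in> T" by (simp add: T_def)
    show "\<forall>u\<in>T. inner (v - blinfun_apply l v) u = 0"
    proof
      fix u assume "u \<in> T"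
      then obtain x where x: "u = blinfun_apply l x" by (auto simp: T_def)
      have "(\<lambda>i. inner (v - oproj (S (r i)) v) (oproj (S (r i)) x))
          \<longlonglongrightarrow> inner (v - blinfun_apply l v) (blinfun_apply l x)"
        by (intro tendsto_intros lim_apply)
      moreover have "inner (v - oproj (S (r i)) v) (oproj (S (r i)) x) = 0" for i
        using oproj_orthogonal oproj_in assms by blast
      ultimately have "(\<lambda>i. 0) \<longlonglongrightarrow> inner (v - blinfun_apply l v) (blinfun_apply l x)"
        by simp
      then show "inner (v - blinfun_apply l v) u = 0"
        using x by (simp add: LIMSEQ_const_iff)
    qed
  qed
  then have "subspace_conv (S \<circ> r) T" using T assms lim_apply by (simp add: subspace_conv_def)
  with r show ?thesis by blast
qed

lemma subspace_conv_subseq: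
  assumes "subspace_conv Ts T" "strict_mono r"
  shows "subspace_conv (Ts \<circ> r) T"
  using assms LIMSEQ_subseq_LIMSEQ[OF _ assms(2)] unfolding subspace_conv_def by (auto simp: o_def)

lemma subspace_conv_oproj_tendsto:
  assumes "subspace_conv Ts T" "v \<in> T"
  shows "(\<lambda>i. oproj (Ts i) v) \<longlonglongrightarrow> v"
proof -
  have "subspace T" and lim: "(\<lambda>i. oproj (Ts i) v) \<longlonglongrightarrow> oproj T v"
    using assms(1) unfolding subspace_conv_def by blast+
  then have "oproj T v = v" using oproj_eq_self_iff assms(2) by blast
  with lim show ?thesis by simp
qed

lemma subspace_conv_approx_mem:
  fixes Ts :: "nat \<Rightarrow> (complex^'m) set"
  assumes conv: "subspace_conv Ts T" and a: "a \<longlonglongrightarrow> l" and \<delta>: "\<delta> \<longlonglongrightarrow> 0"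
    and near: "eventually (\<lambda>i. \<exists>u\<in>Ts i. norm (a i - u) \<le> \<delta> i) sequentially"
  shows "l \<in> T"
proof -
  have sub: "subspace T" "\<And>i. subspace (Ts i)" and lim: "(\<lambda>i. oproj (Ts i) l) \<longlonglongrightarrow> oproj T l"
    using conv unfolding subspace_conv_def by blast+
  have "eventually (\<lambda>i. norm (oproj (Ts i) l - l) \<le> norm (l - a i) + \<delta> i) sequentially"
    using near
  proof eventually_elim
    case (elim i)
    then obtain u where u: "u \<in> Ts i" "norm (a i - u) \<le> \<delta> i" by blast
    have "norm (l - oproj (Ts i) l) \<le> norm (l - u)" by (rule norm_diff_oproj_le[OF sub(2) u(1)])
    also have "\<dots> \<le> norm (l - a i) + norm (a i - u)"
      using norm_triangle_ineq[of "l - a i" "a i - u"] by simp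
    finally show ?case using u(2) norm_minus_commute[of "oproj (Ts i) l" l] by linarith
  qed
  moreover have "(\<lambda>i. norm (l - a i) + \<delta> i) \<longlonglongrightarrow> 0"
    using tendsto_add[OF tendsto_norm_zero[OF LIM_zero[OF a]] \<delta>] by (simp add: norm_minus_commute)
  ultimately have "(\<lambda>i. oproj (Ts i) l) \<longlonglongrightarrow> l"
    by (rule LIM_zero_cancel[OF Lim_null_comparison])
  then have "oproj T l = l" using lim LIMSEQ_unique by blast
  then show ?thesis using oproj_eq_self_iff[OF sub(1)] by blast
qed

section \<open>Complex-linear differentials\<close>

lemma bounded_linear_cmul_left: "bounded_linear (\<lambda>c. cmul c (z::complex^'k))"
  by (rule linear_conv_bounded_linear[THEN iffD1])
    (auto simp: linear_iff cmul_def vec_eq_iff algebra_simps)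

lemma open_cmul_vimage: "open U \<Longrightarrow> open {c. cmul c (z::complex^'k) \<in> U}"
  using continuous_open_vimage[OF _ linear_continuous_at[OF bounded_linear_cmul_left]]
  by (simp add: vimage_def)

lemma cmul_cmul [simp]: "cmul a (cmul b v) = cmul (a * b) (v::complex^'k)"
  by (simp add: cmul_def vec_eq_iff)

lemma norm_cmul: "norm (cmul a (v::complex^'k)) = norm a * norm v"
  by (simp add: cmul_def norm_vec_def norm_mult L2_set_right_distrib)

lemma cmul_0_left [simp]: "cmul 0 v = 0"
  and cmul_1_left [simp]: "cmul 1 v = v"
  and cmul_minus_left: "cmul (- a) v = - cmul a v"
  and cmul_diff_right: "cmul a (v - u) = cmul a v - cmul a u"
  by (simp_all add: cmul_def vec_eq_iff algebra_simps)

lemma cmul_eq_real_combination: "cmul a v = Re a *\<^sub>R v + Im a *\<^sub>R cmul \<i> (v::complex^'k)"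
proof -
  have "a * v $ j = Re a *\<^sub>R v $ j + Im a *\<^sub>R (\<i> * v $ j)" for j
    by (subst complex_eq[of a]) (simp add: scaleR_conv_of_real algebra_simps)
  then show ?thesis by (simp add: cmul_def vec_eq_iff)
qed

lemma linear_cmul_homogeneous:
  fixes D :: "complex^'k \<Rightarrow> complex"
  assumes "linear D" "\<forall>v. D (cmul \<i> v) = \<i> * D v"
  shows "D (cmul a v) = a * D v"
proof -
  have "D (cmul a v) = Re a *\<^sub>R D v + Im a *\<^sub>R D (cmul \<i> v)"
    using assms(1) by (subst cmul_eq_real_combination) (simp add: linear_add linear_scale)
  also have "\<dots> = (of_real (Re a) + \<i> * of_real (Im a)) * D v"
    using assms(2) by (simp add: scaleR_conv_of_real algebra_simps)
  also have "\<dots> = a * D v" using complex_eq[of a] by simp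
  finally show ?thesis .
qed

lemma holo_on_imp_holomorphic_on_line:
  assumes "holo_on U g"
  shows "(\<lambda>c. g (cmul c z)) holomorphic_on {c. cmul c z \<in> U}"
  unfolding holomorphic_on_def
proof
  fix c assume "c \<in> {c. cmul c z \<in> U}"
  then obtain D where D: "(g has_derivative D) (at (cmul c z))" and "\<forall>v. D (cmul \<i> v) = \<i> * D v"
    using assms unfolding holo_on_def by blast
  then have "(D \<circ> (\<lambda>h. cmul h z)) = (\<lambda>h. D z * h)"
    using linear_cmul_homogeneous[OF has_derivative_linear[OF D]] by (auto simp: mult.commute)
  moreover have "((g \<circ> (\<lambda>c. cmul c z)) has_derivative (D \<circ> (\<lambda>h. cmul h z))) (at c)"
    using diff_chain_at[OF bounded_linear_imp_has_derivative[OF bounded_linear_cmul_left] D] .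
  ultimately have "((\<lambda>c. g (cmul c z)) has_field_derivative D z) (at c)"
    by (simp add: has_field_derivative_def o_def)
  then show "(\<lambda>c. g (cmul c z)) field_differentiable at c within {c. cmul c z \<in> U}"
    using field_differentiable_def has_field_derivative_at_within by blast
qed

lemma hom_part_cmul:
  assumes "holo_on U g" "0 \<in> U"
  shows "hom_part g k (cmul c z) = c ^ k * hom_part g k z"
proof -
  have U: "open U" using assms(1) by (simp add: holo_on_def)
  have "(deriv ^^ k) (\<lambda>s. g (cmul (c * s) z)) 0 = c ^ k * (deriv ^^ k) (\<lambda>s. g (cmul s z)) (c * 0)"
    by (rule higher_deriv_compose_linear[OF holo_on_imp_holomorphic_on_line[OF assms(1)]
          open_cmul_vimage[OF U, of "cmul c z"] open_cmul_vimage[OF U], where u = c])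
      (use assms(2) in \<open>auto simp: mult.commute\<close>)
  then show ?thesis by (simp add: hom_part_def mult.commute)
qed

lemma initial_form_cmul:
  "holo_on U g \<Longrightarrow> 0 \<in> U \<Longrightarrow> initial_form g (cmul c z) = c ^ ord0 g * initial_form g z"
  unfolding initial_form_def by (rule hom_part_cmul)

section \<open>Tangent spaces\<close>

lemma local_eqns_differential:
  assumes "local_eqns S x V r g D" "j < r"
  shows "linear (D j)" and "D j (cmul a v) = a * D j v"
proof -
  obtain D' where D': "(g j has_derivative D') (at x)" and "\<forall>v. D' (cmul \<i> v) = \<i> * D' v"
    using assms unfolding local_eqns_def holo_on_def by blast
  moreover have "D j = D'"
    using assms D' has_derivative_unique unfolding local_eqns_def by blast
  ultimately show "linear (D j)" "D j (cmul a v) = a * D j v"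
    using has_derivative_linear linear_cmul_homogeneous by blast+
qed

lemma tangent_at_complex_subspace:
  assumes "tangent_at S x T"
  shows "subspace T" and "v \<in> T \<Longrightarrow> cmul a v \<in> T"
proof -
  obtain V r g D where le: "local_eqns S x V r g D" and T: "T = {v. \<forall>j<r. D j v = 0}"
    using assms unfolding tangent_at_def by blast
  show "subspace T"
    unfolding subspace_def T using local_eqns_differential(1)[OF le]
    by (auto simp: linear_0 linear_add linear_scale)
  show "v \<in> T \<Longrightarrow> cmul a v \<in> T"
    unfolding T using local_eqns_differential(2)[OF le] by auto
qed

lemma tangent_at_imp_mem: "tangent_at S x T \<Longrightarrow> x \<in> S"
  unfolding tangent_at_def local_eqns_def by blast

lemma tangent_at_curve_velocity:
  fixes \<gamma> :: "real \<Rightarrow> complex^'m"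
  assumes T: "tangent_at S (\<gamma> s) T" and \<gamma>: "(\<gamma> has_vector_derivative v) (at s)"
    and in_S: "eventually (\<lambda>t. \<gamma> t \<in> S) (at s)"
  shows "v \<in> T"
proof -
  obtain V r g D where le: "local_eqns S (\<gamma> s) V r g D" and T: "T = {v. \<forall>j<r. D j v = 0}"
    using T unfolding tangent_at_def by blast
  have V: "open V" "\<gamma> s \<in> V" "\<gamma> s \<in> S" and eqns: "S \<inter> V = {y\<in>V. \<forall>j<r. g j y = 0}"
    using le unfolding local_eqns_def by blast+
  have "D j v = 0" if "j < r" for j
  proof -
    have "eventually (\<lambda>t. \<gamma> t \<in> V) (at s)"
      using V has_vector_derivative_continuous[OF \<gamma>]
      by (simp add: isCont_def tendsto_def eventually_at_filter)
    with in_S have "eventually (\<lambda>t. 0 = (g j \<circ> \<gamma>) t) (at s)"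
      by eventually_elim (use eqns that in auto)
    moreover have "0 = (g j \<circ> \<gamma>) s" using V eqns that by auto
    ultimately have "((g j \<circ> \<gamma>) has_derivative (\<lambda>h. 0)) (at s)"
      by (rule has_derivative_transform_eventually[OF has_derivative_const]) simp
    moreover have "(g j has_derivative D j) (at (\<gamma> s))" using le that by (simp add: local_eqns_def)
    then have "((g j \<circ> \<gamma>) has_derivative (\<lambda>h. D j (h *\<^sub>R v))) (at s)"
      using diff_chain_at[OF \<gamma>[unfolded has_vector_derivative_def]] by (simp add: o_def)
    ultimately have "(\<lambda>h. D j (h *\<^sub>R v)) = (\<lambda>h. 0)" using has_derivative_unique by blast
    then show ?thesis by (metis scaleR_one)
  qed
  then show ?thesis using T by blast
qed

lemma image_eq_vimage_inverse:
  assumes "\<And>y. A (B y) = y" "\<And>x. B (A x) = x"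
  shows "A ` V = B -` V"
proof
  show "A ` V \<subseteq> B -` V" using assms(2) by auto
  show "B -` V \<subseteq> A ` V"
  proof
    fix y assume "y \<in> B -` V"
    then show "y \<in> A ` V" using image_eqI[of y A "B y"] assms(1) by simp
  qed
qed

lemma holo_on_compose_linear:
  assumes g: "holo_on V g" and B: "bounded_linear B" "\<And>a v. B (cmul a v) = cmul a (B v)"
  shows "holo_on (B -` V) (\<lambda>y. g (B y))"
  unfolding holo_on_def
proof (intro conjI ballI)
  show "open (B -` V)"
    using g continuous_open_vimage linear_continuous_at[OF B(1)] by (auto simp: holo_on_def)
  fix y assume "y \<in> B -` V"
  then obtain D where D: "(g has_derivative D) (at (B y))" and "\<forall>v. D (cmul \<i> v) = \<i> * D v"
    using g unfolding holo_on_def by blast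
  then have "\<forall>v. D (B (cmul \<i> v)) = \<i> * D (B v)" using B(2) by simp
  moreover have "((\<lambda>y. g (B y)) has_derivative (\<lambda>v. D (B v))) (at y)"
    using diff_chain_at[OF bounded_linear_imp_has_derivative[OF B(1)] D] by (simp add: o_def)
  ultimately show "\<exists>D. ((\<lambda>y. g (B y)) has_derivative D) (at y) \<and> (\<forall>v. D (cmul \<i> v) = \<i> * D v)"
    by blast
qed

lemma local_eqns_linear_image:
  assumes le: "local_eqns S x V r g D"
    and B: "bounded_linear B" "\<And>a v. B (cmul a v) = cmul a (B v)"
    and AB: "\<And>y. A (B y) = y" "\<And>x. B (A x) = x"
    and inv: "\<And>w. A w \<in> S \<longleftrightarrow> w \<in> S"
  shows "local_eqns S (A x) (A ` V) r (\<lambda>j y. g j (B y)) (\<lambda>j y. D j (B y))"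
proof -
  have image: "A ` V = B -` V" using image_eq_vimage_inverse AB by blast
  from le have "x \<in> S" "open V" "x \<in> V" and hol: "\<forall>j<r. holo_on V (g j)"
    and eqns: "S \<inter> V = {y\<in>V. \<forall>j<r. g j y = 0}" and der: "\<forall>j<r. (g j has_derivative D j) (at x)"
    and indep: "\<forall>c :: nat \<Rightarrow> complex. (\<forall>v. (\<Sum>j<r. c j * D j v) = 0) \<longrightarrow> (\<forall>j<r. c j = 0)"
    unfolding local_eqns_def by blast+
  have B_der: "(B has_derivative B) (at y)" for y
    using B(1) bounded_linear_imp_has_derivative by blast
  have "open (A ` V)"
    unfolding image using continuous_open_vimage[OF \<open>open V\<close> linear_continuous_at[OF B(1)]] .
  moreover have "holo_on (A ` V) (\<lambda>y. g j (B y))" if "j < r" for j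
    unfolding image using holo_on_compose_linear[OF _ B] hol that by blast
  moreover have "S \<inter> A ` V = {y \<in> A ` V. \<forall>j<r. g j (B y) = 0}"
  proof -
    have "y \<in> S \<longleftrightarrow> B y \<in> S" for y using inv[of "B y"] AB(1) by simp
    then show ?thesis using eqns image by blast
  qed
  moreover have "((\<lambda>y. g j (B y)) has_derivative (\<lambda>y. D j (B y))) (at (A x))" if "j < r" for j
    using diff_chain_at[OF B_der, of "g j" "D j" "A x"] der that AB by (simp add: o_def)
  moreover have "\<forall>j<r. c j = 0" if "\<forall>v. (\<Sum>j<r. c j * D j (B v)) = 0" for c :: "nat \<Rightarrow> complex"
  proof -
    have "\<forall>u. (\<Sum>j<r. c j * D j u) = 0"
    proof
      fix u show "(\<Sum>j<r. c j * D j u) = 0" using that AB(2)[of u] by metis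
    qed
    then show ?thesis using indep by blast
  qed
  ultimately show ?thesis
    unfolding local_eqns_def using \<open>x \<in> S\<close> \<open>x \<in> V\<close> inv by blast
qed

lemma smooth_part_linear_image:
  fixes S :: "(complex^'m) set"
  assumes "x \<in> smooth_part S"
    and "bounded_linear B" "\<And>a v. B (cmul a v) = cmul a (B v)"
    and "\<And>y. A (B y) = y" "\<And>x. B (A x) = x" "\<And>w. A w \<in> S \<longleftrightarrow> w \<in> S"
  shows "A x \<in> smooth_part S"
proof -
  obtain k V r g D where "local_eqns S x V r g D" "k + r = CARD('m)"
    using assms(1) unfolding smooth_part_def smooth_pt_dim_def by blast
  then show ?thesis
    using local_eqns_linear_image[OF _ assms(2-6)] unfolding smooth_part_def smooth_pt_dim_def by blast
qed

lemma tangent_at_linear_image: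
  assumes "tangent_at S x T"
    and "bounded_linear B" "\<And>a v. B (cmul a v) = cmul a (B v)"
    and "\<And>y. A (B y) = y" "\<And>x. B (A x) = x" "\<And>w. A w \<in> S \<longleftrightarrow> w \<in> S"
  shows "tangent_at S (A x) (A ` T)"
proof -
  obtain V r g D where le: "local_eqns S x V r g D" and T: "T = {v. \<forall>j<r. D j v = 0}"
    using assms(1) unfolding tangent_at_def by blast
  have "A ` T = {v. \<forall>j<r. D j (B v) = 0}"
    unfolding T image_eq_vimage_inverse[of A B, OF assms(4,5)] by auto
  then show ?thesis
    unfolding tangent_at_def using local_eqns_linear_image[OF le assms(2-6)] by blast
qed

section \<open>Coordinates and dilations of \<open>\<complex>\<^sup>n\<^sup>+\<^sup>1 \<times> \<complex>\<close>\<close>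

lemma vec_eq_zpart_tpart_iff: "v = w \<longleftrightarrow> zpart v = zpart w \<and> tpart v = tpart w"
  by (auto simp: zpart_def tpart_def vec_eq_iff split: option.splits) (metis option.exhaust)

lemma zpart_0 [simp]: "zpart 0 = 0"
  and zpart_add [simp]: "zpart (v + w) = zpart v + zpart w"
  and zpart_diff [simp]: "zpart (v - w) = zpart v - zpart w"
  and zpart_cmul [simp]: "zpart (cmul a v) = cmul a (zpart v)"
  by (simp_all add: zpart_def cmul_def vec_eq_iff)

lemma tpart_0 [simp]: "tpart 0 = 0"
  and tpart_add [simp]: "tpart (v + w) = tpart v + tpart w"
  and tpart_diff [simp]: "tpart (v - w) = tpart v - tpart w"
  and tpart_cmul [simp]: "tpart (cmul a v) = a * tpart v"
  by (simp_all add: tpart_def cmul_def)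

lemma norm_power2_zpart_tpart: "(norm w)\<^sup>2 = (norm (zpart w))\<^sup>2 + (norm (tpart w))\<^sup>2"
proof -
  have "(norm w)\<^sup>2 = (\<Sum>j\<in>insert None (range Some). (norm (w $ j))\<^sup>2)"
    by (simp add: power2_norm_eq_inner inner_vec_def flip: UNIV_option_conv)
  also have "\<dots> = (\<Sum>k\<in>UNIV. (norm (w $ Some k))\<^sup>2) + (norm (w $ None))\<^sup>2"
    by (simp add: sum.reindex)
  also have "\<dots> = (norm (zpart w))\<^sup>2 + (norm (tpart w))\<^sup>2"
    by (simp add: power2_norm_eq_inner inner_vec_def zpart_def tpart_def)
  finally show ?thesis .
qed

lemma norm_zpart_le: "norm (zpart w) \<le> norm w"
  by (rule power2_le_imp_le) (simp_all add: norm_power2_zpart_tpart)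

lemma norm_tpart_le: "norm (tpart w) \<le> norm w"
  by (rule power2_le_imp_le) (simp_all add: norm_power2_zpart_tpart)

lemma norm_le_zpart_tpart: "norm w \<le> norm (zpart w) + norm (tpart w)"
  by (rule power2_le_imp_le) (simp_all add: norm_power2_zpart_tpart power2_sum)

lemma spec_axis_tangent_at_0: "tangent_at (spec_axis :: (complex^('n::finite option)) set) 0 spec_axis"
proof -
  obtain e :: "nat \<Rightarrow> 'n" where e: "bij_betw e {..<CARD('n)} UNIV"
    using bij_betw_from_nat_into_finite[of "UNIV :: 'n set"] by auto
  define g :: "nat \<Rightarrow> complex^('n option) \<Rightarrow> complex" where "g j w = w $ Some (e j)" for j w
  have "zpart y = 0 \<longleftrightarrow> (\<forall>j<CARD('n). g j y = 0)" for y
  proof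
    assume h: "\<forall>j<CARD('n). g j y = 0"
    have "y $ Some k = 0" for k
    proof -
      obtain j where "j < CARD('n)" "k = e j" using e unfolding bij_betw_def by fastforce
      then show ?thesis using h by (simp add: g_def)
    qed
    then show "zpart y = 0" by (simp add: zpart_def vec_eq_iff)
  qed (simp add: g_def zpart_def vec_eq_iff)
  then have axis_eqns: "spec_axis = {y. \<forall>j<CARD('n). g j y = 0}"
    by (simp add: spec_axis_def)
  have der: "(g j has_derivative g j) (at x)" for j x
    unfolding g_def using bounded_linear_vec_nth bounded_linear_imp_has_derivative by blast
  have "holo_on UNIV (g j)" for j
    unfolding holo_on_def
  proof (intro conjI open_UNIV ballI exI[of _ "g j"])
    show "\<forall>v. g j (cmul \<i> v) = \<i> * g j v" by (simp add: g_def cmul_def)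
  qed (rule der)
  moreover have "\<forall>j<CARD('n). c j = 0" if "\<forall>v. (\<Sum>j<CARD('n). c j * g j v) = 0" for c
  proof (intro allI impI)
    fix k assume k: "k < CARD('n)"
    have "e j = e k \<longleftrightarrow> j = k" if "j < CARD('n)" for j
      using e that k unfolding bij_betw_def inj_on_def by auto
    then have "(\<Sum>j<CARD('n). c j * g j (axis (Some (e k)) 1)) = c k"
      using k by (simp add: g_def axis_def if_distrib sum.delta cong: if_cong)
    then show "c k = 0" using that by simp
  qed
  ultimately have "local_eqns spec_axis 0 UNIV CARD('n) g g"
    unfolding local_eqns_def using der axis_eqns by (auto simp: spec_axis_def)
  then show ?thesis unfolding tangent_at_def using axis_eqns by blast
qed

definition dilate :: "real \<Rightarrow> complex^('n::finite option) \<Rightarrow> complex^('n option)" where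
  "dilate l w = (\<chi> j. (if j = None then complex_of_real (inverse l) else complex_of_real l) * w $ j)"

definition dilation_velocity :: "complex^('n::finite option) \<Rightarrow> complex^('n option)" where
  "dilation_velocity w = (\<chi> j. if j = None then - w $ j else w $ j)"

definition t_unit :: "complex^('n::finite option)" where
  "t_unit = (\<chi> j. if j = None then 1 else 0)"

lemma zpart_dilate [simp]: "zpart (dilate l w) = cmul (of_real l) (zpart w)"
  and tpart_dilate [simp]: "tpart (dilate l w) = of_real (inverse l) * tpart w"
  and zpart_dilation_velocity [simp]: "zpart (dilation_velocity w) = zpart w"
  and tpart_dilation_velocity [simp]: "tpart (dilation_velocity w) = - tpart w"
  and zpart_t_unit [simp]: "zpart t_unit = 0"
  and tpart_t_unit [simp]: "tpart t_unit = 1"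
  by (simp_all add: zpart_def tpart_def dilate_def dilation_velocity_def t_unit_def cmul_def vec_eq_iff)

lemma dilate_dilate_inverse: "l \<noteq> 0 \<Longrightarrow> dilate (inverse l) (dilate l w) = w"
  by (simp add: vec_eq_zpart_tpart_iff)

lemma dilate_1 [simp]: "dilate 1 w = w"
  by (simp add: vec_eq_zpart_tpart_iff)

lemma dilate_cmul: "dilate l (cmul a v) = cmul a (dilate l v)"
  by (simp add: vec_eq_zpart_tpart_iff algebra_simps)

lemma bounded_linear_dilate: "bounded_linear (dilate l)"
  by (rule linear_conv_bounded_linear[THEN iffD1])
    (auto simp: linear_iff dilate_def vec_eq_iff algebra_simps)

lemma norm_dilate_le:
  assumes "l > 0"
  shows "norm (dilate l w) \<le> l * norm (zpart w) + norm (tpart w) / l"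
  using norm_le_zpart_tpart[of "dilate l w"] assms
  by (simp add: norm_cmul norm_mult norm_inverse divide_inverse mult.commute)

lemma dilate_has_vector_derivative:
  "((\<lambda>l. dilate l w) has_vector_derivative dilation_velocity w) (at 1)"
proof -
  define wz wt where "wz = (\<chi> j. if j = None then 0 else w $ j)"
    and "wt = (\<chi> j. if j = None then w $ j else (0::complex))"
  have "dilate l w = l *\<^sub>R wz + inverse l *\<^sub>R wt" for l
    unfolding vec_eq_iff vector_add_component vector_scaleR_component
    by (simp add: dilate_def wz_def wt_def scaleR_conv_of_real)
  moreover have "((\<lambda>l. l *\<^sub>R wz + inverse l *\<^sub>R wt) has_vector_derivative
      (1 *\<^sub>R wz + (- (inverse 1 ^ 2)) *\<^sub>R wt)) (at (1::real))"
    by (auto intro!: derivative_eq_intros simp: power2_eq_square)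
  moreover have "1 *\<^sub>R wz + (- (inverse 1 ^ 2)) *\<^sub>R wt = dilation_velocity w"
    by (simp add: dilation_velocity_def wz_def wt_def vec_eq_iff)
  ultimately show ?thesis by simp
qed

lemma cmul_tpart_zpart_dilate:
  "l \<noteq> 0 \<Longrightarrow> cmul (tpart (dilate l w)) (zpart (dilate l w)) = cmul (tpart w) (zpart w)"
  by (simp add: field_simps)

lemma Fspec_dilate:
  assumes "holo_on U (f i)" "0 \<in> U" "l \<noteq> 0"
  shows "Fspec f i (dilate l w) = of_real l ^ ord0 (f i) * Fspec f i w"
proof (cases "tpart w = 0")
  case True
  then show ?thesis using initial_form_cmul[OF assms(1,2)] by (simp add: Fspec_def)
next
  case False
  then show ?thesis
    using assms(3) cmul_tpart_zpart_dilate[OF assms(3), of w]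
    by (simp add: Fspec_def power_mult_distrib field_simps)
qed

lemma dilate_mem_spec_space_iff:
  assumes "\<forall>i<p. holo_on U (f i)" "0 \<in> U" "l \<noteq> 0"
  shows "dilate l w \<in> spec_space U p f \<longleftrightarrow> w \<in> spec_space U p f"
  unfolding spec_space_def mem_Collect_eq cmul_tpart_zpart_dilate[OF assms(3)]
  using Fspec_dilate[OF _ assms(2,3)] assms(1,3) by simp

section \<open>Whitney b) for dilation-invariant sets\<close>

lemma dilation_velocity_tangent:
  assumes inv: "\<And>l w. l > 0 \<Longrightarrow> dilate l w \<in> S \<longleftrightarrow> w \<in> S" and T: "tangent_at S w T"
  shows "dilation_velocity w \<in> T"
proof (rule tangent_at_curve_velocity[of S "\<lambda>l. dilate l w" 1])
  show "tangent_at S (dilate 1 w) T" using T by simp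
  have "eventually (\<lambda>l::real. l > 0) (at 1)"
    using order_tendstoD(1)[OF tendsto_ident_at, of 0 "1::real"] by simp
  then show "eventually (\<lambda>l. dilate l w \<in> S) (at 1)"
    by eventually_elim (use inv tangent_at_imp_mem[OF T] in blast)
qed (rule dilate_has_vector_derivative)

lemma dilate_sqrt_tendsto_0:
  assumes xs: "xs \<longlonglongrightarrow> 0" and z: "\<And>i. zpart (xs i) \<noteq> 0"
  shows "(\<lambda>i. dilate (inverse (sqrt (norm (zpart (xs i))))) (xs i)) \<longlonglongrightarrow> 0"
proof (rule Lim_null_comparison)
  have "norm (dilate (inverse (sqrt (norm (zpart (xs i))))) (xs i))
      \<le> sqrt (norm (xs i)) * (1 + norm (xs i))" for i
  proof -
    define n where "n = norm (zpart (xs i))"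
    have "n > 0" "n \<le> norm (xs i)" "norm (tpart (xs i)) \<le> norm (xs i)"
      using z norm_zpart_le norm_tpart_le by (auto simp: n_def)
    have "norm (dilate (inverse (sqrt n)) (xs i))
        \<le> inverse (sqrt n) * n + norm (tpart (xs i)) / inverse (sqrt n)"
      using norm_dilate_le[of "inverse (sqrt n)" "xs i"] \<open>n > 0\<close> by (simp add: n_def)
    also have "\<dots> = sqrt n + sqrt n * norm (tpart (xs i))"
      using \<open>n > 0\<close> by (simp add: field_simps real_div_sqrt)
    also have "\<dots> \<le> sqrt (norm (xs i)) + sqrt (norm (xs i)) * norm (xs i)"
      using \<open>n \<le> norm (xs i)\<close> \<open>norm (tpart (xs i)) \<le> norm (xs i)\<close>
      by (intro add_mono mult_mono) auto
    finally show ?thesis by (simp add: n_def algebra_simps)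
  qed
  then show "eventually (\<lambda>i. norm (dilate (inverse (sqrt (norm (zpart (xs i))))) (xs i))
      \<le> sqrt (norm (xs i)) * (1 + norm (xs i))) sequentially"
    by simp
  have "(\<lambda>i. sqrt (norm (xs i)) * (1 + norm (xs i))) \<longlonglongrightarrow> sqrt 0 * (1 + 0)"
    by (intro tendsto_mult tendsto_add tendsto_real_sqrt tendsto_const tendsto_norm_zero xs)
  then show "(\<lambda>i. sqrt (norm (xs i)) * (1 + norm (xs i))) \<longlonglongrightarrow> 0" by simp
qed

text \<open>Whitney a) is applied to the dilated points \<open>(z / \<bar>z\<bar>\<^sup>1\<^sup>/\<^sup>2, \<bar>z\<bar>\<^sup>1\<^sup>/\<^sup>2 t)\<close>, which tend to 0.\<close>
lemma whitney_a_dilated_tangents: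
  fixes S :: "(complex^('n::finite option)) set"
  assumes inv: "\<And>l w. l > 0 \<Longrightarrow> dilate l w \<in> S \<longleftrightarrow> w \<in> S"
    and a: "whitney_a S spec_axis 0"
    and xs: "\<And>i. xs i \<in> smooth_part S - spec_axis" "\<And>i. tangent_at S (xs i) (Ts i)" "xs \<longlonglongrightarrow> 0"
  shows "\<exists>r p. strict_mono r \<and> p \<longlonglongrightarrow> t_unit \<and>
    (\<forall>i. dilate (sqrt (norm (zpart (xs (r i))))) (p i) \<in> Ts (r i))"
proof -
  define l where "l i = inverse (sqrt (norm (zpart (xs i))))" for i
  have z: "zpart (xs i) \<noteq> 0" for i using xs(1) by (simp add: spec_axis_def)
  then have l: "l i > 0" for i by (simp add: l_def)
  have dilate_l: "dilate (l i) (dilate (inverse (l i)) w) = w"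
    "dilate (inverse (l i)) (dilate (l i) w) = w" for i and w :: "complex^('n option)"
    using dilate_dilate_inverse[of "l i"] dilate_dilate_inverse[of "inverse (l i)"] l[of i] by auto
  note symmetry = bounded_linear_dilate dilate_cmul dilate_l inv[OF l]
  define T' where "T' i = dilate (l i) ` Ts i" for i
  have smooth': "dilate (l i) (xs i) \<in> smooth_part S" for i
    using smooth_part_linear_image[OF DiffD1[OF xs(1)] symmetry] .
  have tangent': "tangent_at S (dilate (l i) (xs i)) (T' i)" for i
    unfolding T'_def using tangent_at_linear_image[OF xs(2) symmetry] .
  obtain r T'' where r: "strict_mono r" and T'': "subspace_conv (T' \<circ> r) T''"
    using subspace_conv_convergent_subseq tangent_at_complex_subspace(1)[OF tangent'] by blast
  have "(\<lambda>i. dilate (l (r i)) (xs (r i))) \<longlonglongrightarrow> 0"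
    using LIMSEQ_subseq_LIMSEQ[OF dilate_sqrt_tendsto_0[OF xs(3) z] r] by (simp add: l_def o_def)
  then have "spec_axis \<subseteq> T''"
    using a[unfolded whitney_a_def, rule_format, of "\<lambda>i. dilate (l (r i)) (xs (r i))" "T' \<circ> r"]
      T'' smooth' tangent' spec_axis_tangent_at_0
    by simp
  then have "t_unit \<in> T''" using zpart_t_unit unfolding spec_axis_def by blast
  define p where "p = (\<lambda>i. oproj (T' (r i)) t_unit)"
  have "p \<longlonglongrightarrow> t_unit"
    using subspace_conv_oproj_tendsto[OF T'' \<open>t_unit \<in> T''\<close>] by (simp add: p_def)
  moreover have "dilate (inverse (l (r i))) (p i) \<in> Ts (r i)" for i
  proof -
    have "p i \<in> dilate (l (r i)) ` Ts (r i)"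
      using oproj_in[OF tangent_at_complex_subspace(1)[OF tangent']] unfolding p_def T'_def .
    then show ?thesis using dilate_l(2) by auto
  qed
  ultimately show ?thesis using r l by (auto simp: l_def)
qed

text \<open>For \<open>w = (z, t)\<close> and \<open>y = (0, s)\<close> the witness is the dilation velocity \<open>(z, -t)\<close> plus
  \<open>2t - s\<close> times a multiple \<open>\<partial>\<^sub>t + e\<close>, \<open>\<bar>e\<bar> \<le> \<bar>z\<bar>\<close>, of the dilated \<open>p\<close>.\<close>
lemma secant_close_to_tangent:
  fixes w y p :: "complex^('n::finite option)"
  assumes T: "subspace T" "\<And>a v. v \<in> T \<Longrightarrow> cmul a v \<in> T"
    and w: "w \<notin> spec_axis" "dilation_velocity w \<in> T"
    and p: "dilate (sqrt (norm (zpart w))) p \<in> T" "norm (p - t_unit) \<le> 1/2"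
    and y: "y \<in> spec_axis"
  shows "\<exists>u\<in>T. norm ((w - y) - u) \<le> norm (2 * tpart w - tpart y) * norm (w - y)"
proof -
  define c where "c = 2 * tpart w - tpart y"
  define n where "n = norm (zpart w)"
  have n: "n > 0" "of_real (sqrt n) * of_real (sqrt n) = (of_real n :: complex)"
    using w(1) by (auto simp: n_def spec_axis_def simp flip: of_real_mult)
  have "norm (tpart p - 1) \<le> 1/2" "norm (zpart p) \<le> 1/2"
    using norm_tpart_le[of "p - t_unit"] norm_zpart_le[of "p - t_unit"] p(2) by simp_all
  then have p_t: "norm (tpart p) \<ge> 1/2" and p_z: "norm (zpart p) \<le> norm (tpart p)"
    using norm_triangle_ineq2[of 1 "tpart p"] norm_minus_commute[of 1 "tpart p"] by auto
  then have "tpart p \<noteq> 0" by auto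
  define u where "u = dilation_velocity w + cmul (c * of_real (sqrt n) / tpart p) (dilate (sqrt n) p)"
  have "u \<in> T" unfolding u_def n_def using T w(2) p(1) subspace_add by blast
  have "zpart y = 0" using y by (simp add: spec_axis_def)
  then have "tpart ((w - y) - u) = 0"
    and "zpart ((w - y) - u) = cmul (- (c * of_real n / tpart p)) (zpart p)"
    using n \<open>tpart p \<noteq> 0\<close> by (simp_all add: u_def c_def cmul_minus_left field_simps)
  then have "norm ((w - y) - u) = norm c * n * (norm (zpart p) / norm (tpart p))"
    using norm_power2_zpart_tpart[of "(w - y) - u"] n
    by (simp add: norm_cmul norm_mult norm_divide)
  also have "\<dots> \<le> norm c * n * 1"
    by (rule mult_left_mono) (use p_z \<open>tpart p \<noteq> 0\<close> n in \<open>simp_all add: divide_le_eq_1\<close>)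
  also have "\<dots> \<le> norm c * norm (w - y)"
    using norm_zpart_le[of "w - y"] \<open>zpart y = 0\<close> by (simp add: n_def mult_left_mono)
  finally show ?thesis using \<open>u \<in> T\<close> by (auto simp: c_def)
qed

lemma subspace_cline: "subspace (cline v)"
  unfolding subspace_def
proof (intro conjI ballI allI)
  show "0 \<in> cline v" using cmul_0_left unfolding cline_def by (metis rangeI)
  fix x y assume "x \<in> cline v" "y \<in> cline v"
  then obtain a b where "x = cmul a v" "y = cmul b v" by (auto simp: cline_def)
  then have "x + y = cmul (a + b) v" by (simp add: cmul_def vec_eq_iff algebra_simps)
  then show "x + y \<in> cline v" by (simp add: cline_def)
next
  fix r :: real and x assume "x \<in> cline v"
  then obtain a where "x = cmul a v" by (auto simp: cline_def)
  then have "r *\<^sub>R x = cmul (of_real r * a) v"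
    unfolding vec_eq_iff vector_scaleR_component by (simp add: cmul_def scaleR_conv_of_real)
  then show "r *\<^sub>R x \<in> cline v" by (simp add: cline_def)
qed

lemma oproj_cline_close_to:
  assumes T: "\<And>a u. u \<in> T \<Longrightarrow> cmul a u \<in> T" and u: "u \<in> T"
    and close: "norm (v - u) \<le> e * norm v" and "e \<ge> 0"
  shows "\<exists>u'\<in>T. norm (oproj (cline v) l - u') \<le> e * norm l"
proof -
  obtain k where k: "oproj (cline v) l = cmul k v"
    using oproj_in[OF subspace_cline] by (auto simp: cline_def)
  have "norm (cmul k v - cmul k u) = norm k * norm (v - u)"
    by (simp add: norm_cmul flip: cmul_diff_right)
  also have "\<dots> \<le> e * norm (cmul k v)"
    using mult_left_mono[OF close norm_ge_zero[of k]] by (simp add: norm_cmul mult.left_commute)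
  also have "\<dots> \<le> e * norm l"
    using norm_oproj_le[OF subspace_cline, of v l] k \<open>e \<ge> 0\<close> by (simp add: mult_left_mono)
  finally show ?thesis using k T[OF u] by metis
qed

lemma whitney_b_if_dilation_invariant:
  fixes S :: "(complex^('n::finite option)) set"
  assumes inv: "\<And>l w. l > 0 \<Longrightarrow> dilate l w \<in> S \<longleftrightarrow> w \<in> S"
    and a: "whitney_a S spec_axis 0"
  shows "whitney_b S spec_axis 0"
  unfolding whitney_b_def
proof (intro allI impI subsetI)
  fix xs ys :: "nat \<Rightarrow> complex^('n option)" and Ts T L l
  assume H: "\<forall>i. xs i \<in> smooth_part S - spec_axis \<and> ys i \<in> spec_axis \<and> tangent_at S (xs i) (Ts i)"
    and xs: "xs \<longlonglongrightarrow> 0" and ys: "ys \<longlonglongrightarrow> 0" and T: "subspace_conv Ts T"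
    and L: "subspace_conv (\<lambda>i. cline (xs i - ys i)) L" and "l \<in> L"
  obtain r p where r: "strict_mono r" and p: "p \<longlonglongrightarrow> t_unit"
    and pT: "\<And>i. dilate (sqrt (norm (zpart (xs (r i))))) (p i) \<in> Ts (r i)"
    using whitney_a_dilated_tangents[OF inv a _ _ xs] H by blast
  define c where "c i = 2 * tpart (xs i) - tpart (ys i)" for i
  have "(\<lambda>i. tpart (xs i)) \<longlonglongrightarrow> 0" "(\<lambda>i. tpart (ys i)) \<longlonglongrightarrow> 0"
    using tendsto_vec_nth[OF xs, of None] tendsto_vec_nth[OF ys, of None] by (simp_all add: tpart_def)
  then have "c \<longlonglongrightarrow> 2 * 0 - 0"
    unfolding c_def by (intro tendsto_diff tendsto_mult_left)
  then have "c \<longlonglongrightarrow> 0" by simp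
  have "eventually (\<lambda>i. norm (p i - t_unit) \<le> 1/2) sequentially"
    using order_tendstoD(2)[OF tendsto_norm_zero[OF LIM_zero[OF p]], of "1/2"]
    by (auto elim: eventually_mono)
  then have "eventually (\<lambda>i. \<exists>u\<in>Ts (r i).
      norm (oproj (cline (xs (r i) - ys (r i))) l - u) \<le> norm (c (r i)) * norm l) sequentially"
  proof eventually_elim
    case (elim i)
    have tangent: "tangent_at S (xs (r i)) (Ts (r i))" using H by blast
    obtain u where u: "u \<in> Ts (r i)"
      and close: "norm ((xs (r i) - ys (r i)) - u) \<le> norm (c (r i)) * norm (xs (r i) - ys (r i))"
      using secant_close_to_tangent[OF tangent_at_complex_subspace[OF tangent]
          _ dilation_velocity_tangent[OF inv tangent] pT elim] H
      by (auto simp: c_def)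
    show ?case
      by (rule oproj_cline_close_to[OF tangent_at_complex_subspace(2)[OF tangent] u close norm_ge_zero])
  qed
  moreover have "(\<lambda>i. oproj (cline (xs (r i) - ys (r i))) l) \<longlonglongrightarrow> l"
    using LIMSEQ_subseq_LIMSEQ[OF subspace_conv_oproj_tendsto[OF L \<open>l \<in> L\<close>] r] by (simp add: o_def)
  moreover have "(\<lambda>i. norm (c (r i)) * norm l) \<longlonglongrightarrow> 0"
    using tendsto_mult_left_zero[OF tendsto_norm_zero[OF LIMSEQ_subseq_LIMSEQ[OF \<open>c \<longlonglongrightarrow> 0\<close> r]]]
    by (simp add: o_def)
  ultimately show "l \<in> T"
    using subspace_conv_approx_mem[OF subspace_conv_subseq[OF T r]] by (simp add: o_def)
qed

theorem mainTheorem6: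
  fixes X U :: "(complex^'n) set" and f :: "nat \<Rightarrow> complex^'n \<Rightarrow> complex" and p d :: nat
  assumes "0 \<in> X"
    and "open U" and "0 \<in> U" and "\<forall>i<p. holo_on U (f i)"
    and "germ_zero_set X p f"
    and "generates_ideal X p f"
    and "\<forall>i<p. \<exists>k. hom_part (f i) k \<noteq> (\<lambda>_. 0)"
    and "initial_forms_generate X p f"
    and "pure_dim X d"
    and "whitney_a (spec_space U p f) spec_axis 0"
  shows "whitney_b (spec_space U p f) spec_axis 0"
proof (rule whitney_b_if_dilation_invariant)
  show "dilate l w \<in> spec_space U p f \<longleftrightarrow> w \<in> spec_space U p f" if "l > 0" for l w
    using dilate_mem_spec_space_iff[OF assms(4,3)] that by simp
qed (fact assms(10))

end
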